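(* Let $\mathbf{k}$ be a commutative ring, $\lambda\in\mathbf{k}$ and $X$ a set, and let $(\mathbf{k}\mathcal{F}_X^a,\diamond,B^+)$ and $\Delta_a:\mathbf{k}\mathcal{F}_X^a\to\mathbf{k}\mathcal{F}_X^a\otimes\mathbf{k}\mathcal{F}_X^a$ be as described in the context. Then: (1) $\Delta_a(\bullet)=\bullet\otimes\bullet$; (2) $\Delta_a(\bullet x\bullet)=\bullet x\bullet\otimes\bullet+\bullet\otimes\bullet x\bullet$ for every $x\in X$; (3) $\Delta_a(B^+(F))=B^+(F)\otimes\bullet+(\mathrm{id}\otimes B^+)(\Delta_a(F))$ for all $F\in\mathcal{F}_X^a$; (4) $\Delta_a(F_1\diamond F_2)=\Delta_a(F_1)\diamond\Delta_a(F_2)$ for all $F_1,F_2\in\mathcal{F}_X^a$, where $\mathbf{k}\mathcal{F}_X^a\otimes\mathbf{k}\mathcal{F}_X^a$ carries the componentwise product $(a\otimes b)\diamond(c\otimes d)=(a\diamond c)\otimes(b\diamond d)$.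
   Context: Angularly decorated forests. The set $\mathcal{F}_X^a$ of angularly decorated (planar rooted) forests and its subset of angularly decorated trees are defined recursively: the one-vertex tree $\bullet$ is a tree; if $T_1,\dots,T_k$ ($k\ge1$) are trees and $x_1,\dots,x_{k-1}\in X$, then the word $T_1x_1T_2x_2\cdots x_{k-1}T_k$ is a forest (for $k=1$ it is the tree $T_1$); and if $F=T_1x_1\cdots x_{k-1}T_k$ is a forest, then $B^+(F)$ is a tree, namely the planar tree obtained by adding a new root joined by edges to the roots of $T_1,\dots,T_k$ (in this order), the decoration $x_i$ sitting in the angle between the $i$-th and $(i+1)$-th children. Thus every angle between adjacent children of a vertex, and every gap between adjacent trees of a forest, carries an element of $X$. The depth of a tree is the maximal length of a path from the root to a leaf ($\mathrm{dep}(\bullet)=0$, $\mathrm{dep}(B^+(F))=\mathrm{dep}(F)+1$); the depth of a forest is the maximum depth of its trees. $\mathbf{k}\mathcal{F}_X^a$ is the free $\mathbf{k}$-module on $\mathcal{F}_X^a$, and $B^+$ is extended linearly. Product. The bilinear product $\diamond$ on $\mathbf{k}\mathcal{F}_X^a$ is defined by recursion on the sum of depths: for trees, $\bullet\diamond\bullet=\bullet$, $T\diamond\bullet=T$, $\bullet\diamond T=T$, and $B^+(\overline{T})\diamond B^+(\overline{T'})=B^+\big(B^+(\overline{T})\diamond\overline{T'}\big)+B^+\big(\overline{T}\diamond B^+(\overline{T'})\big)+\lambda B^+\big(\overline{T}\diamond\overline{T'}\big)$; for forests $T=T_1x_1\cdots x_{m-1}T_m$ and $T'=T'_1y_1\cdots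 y_{n-1}T'_n$ (trees $T_i,T'_j$, letters $x_i,y_j\in X$), $T\diamond T'=T_1x_1\cdots x_{m-1}(T_m\diamond T'_1)y_1T'_2\cdots y_{n-1}T'_n$, extended linearly in the middle factor. With this product, $\mathbf{k}\mathcal{F}_X^a$ is an associative algebra with unit $\bullet$ and $B^+$ is a Rota–Baxter operator of weight $\lambda$. Note that $A\,x\,B=A\diamond(\bullet x\bullet)\diamond B$ for forests $A,B$ and $x\in X$. Coproduct. Let $F\in\mathcal{F}_X^a$. A vertex is a non-leaf vertex if it has at least one child (the vertex of a tree $\bullet$ is a leaf). For a non-leaf vertex $v$, the rooted subtree $F_v$ is the angularly decorated tree consisting of $v$, all its descendants, the edges between them, and all decorations in angles between children of vertices of $F_v$. A decoration occurrence is an occurrence of a letter of $X$ in $F$ (an angle between two adjacent children of a vertex, or a gap between two adjacent trees of the forest). An admissible subforest $H$ of $F$ is a finite (possibly empty) set of pieces, each either a rooted subtree $F_v$ ($v$ non-leaf) or a single decoration occurrence, pairwise disjoint: no two chosen rooted subtrees share a vertex, and no chosen decoration occurrence lies inside a chosen rooted subtree. List the pieces in their left-to-right planar order $H_1,\dots,H_n$. The closure is $\mathrm{cl}(H)=\widehat{H_1}\diamond\cdots\diamond\widehat{H_n}$, where $\widehat{H_i}=H_i$ if $H_i$ is a rooted subtree and $\widehat{H_i}=\bullet x\bullet$ if $H_i$ is an occurrence of $x\in X$; $\mathrm{cl}(\emptyset)=\bullet$. The quotient $F/H\in\mathbf{k}\mathcal{F}_X^a$ is obtained by replacing in $F$ each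 chosen rooted subtree by a single leaf vertex $\bullet$ and each chosen decoration occurrence by a formal symbol $\star$, and then evaluating recursively: a word $T_1s_1T_2\cdots s_{k-1}T_k$ with $s_i\in X\cup\{\star\}$ evaluates to $\overline{T_1}\diamond c(s_1)\diamond\overline{T_2}\diamond\cdots\diamond c(s_{k-1})\diamond\overline{T_k}$, where $c(x)=\bullet x\bullet$ for $x\in X$, $c(\star)=\bullet$, $\overline{\bullet}=\bullet$, and $\overline{B^+(W)}=B^+(\text{value of }W)$. The angular coproduct is $\Delta_a(F)=\sum_{H}\mathrm{cl}(H)\otimes F/H$, the sum over all admissible subforests $H$ of $F$, extended linearly to $\mathbf{k}\mathcal{F}_X^a$. *)

theory Defs
  imports "HOL-Library.Poly_Mapping"
begin

text \<open>A tree is either the one-vertex tree (Leaf) or B+ of a forest; a forest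
  T1 x1 T2 ... x_{k-1} Tk is represented as the pair (T1, [(x1,T2),...,(x_{k-1},Tk)]).
  The decoration set X is the type 'x.\<close>

datatype 'x atree = Leaf | Bp "'x atree" "('x \<times> 'x atree) list"

type_synonym 'x aforest = "'x atree \<times> ('x \<times> 'x atree) list"

definition bplusF :: "'x aforest \<Rightarrow> 'x atree" where
  "bplusF F = Bp (fst F) (snd F)"

definition bulletF :: "'x aforest" where
  "bulletF = (Leaf, [])"

definition decF :: "'x \<Rightarrow> 'x aforest" where
  "decF x = (Leaf, [(x, Leaf)])"

definition treeF :: "'x atree \<Rightarrow> 'x aforest" where
  "treeF t = (t, [])"

definition lastT :: "'x aforest \<Rightarrow> 'x atree" where
  "lastT F = (if snd F = [] then fst F else snd (last (snd F)))"

definition replaceLast :: "'x aforest \<Rightarrow> 'x atree \<Rightarrow> 'x aforest" where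
  "replaceLast F t = (if snd F = [] then (t, [])
     else (fst F, butlast (snd F) @ [(fst (last (snd F)), t)]))"

text \<open>glue F t G: replace the last tree of F by t and append the remaining trees of G
  (i.e. F with its last tree and G with its first tree merged into t).\<close>
definition glue :: "'x aforest \<Rightarrow> 'x atree \<Rightarrow> 'x aforest \<Rightarrow> 'x aforest" where
  "glue F t G = (fst (replaceLast F t), snd (replaceLast F t) @ snd G)"

definition smul :: "'k::comm_ring_1 \<Rightarrow> ('a \<Rightarrow>\<^sub>0 'k) \<Rightarrow> ('a \<Rightarrow>\<^sub>0 'k)" where
  "smul c p = Poly_Mapping.map (\<lambda>v. c * v) p"

definition basis :: "'a \<Rightarrow> ('a \<Rightarrow>\<^sub>0 'k::comm_ring_1)" where
  "basis a = Poly_Mapping.single a 1"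

definition linL :: "('k::comm_ring_1 \<times> 'a) list \<Rightarrow> ('a \<Rightarrow>\<^sub>0 'k)" where
  "linL l = sum_list (map (\<lambda>(c, a). Poly_Mapping.single a c) l)"

definition lin_ext :: "('a \<Rightarrow> ('b \<Rightarrow>\<^sub>0 'k::comm_ring_1)) \<Rightarrow> ('a \<Rightarrow>\<^sub>0 'k) \<Rightarrow> ('b \<Rightarrow>\<^sub>0 'k)" where
  "lin_ext f p = (\<Sum>a\<in>Poly_Mapping.keys p. smul (Poly_Mapping.lookup p a) (f a))"

definition bilin_ext :: "('a \<Rightarrow> 'b \<Rightarrow> ('c \<Rightarrow>\<^sub>0 'k::comm_ring_1)) \<Rightarrow> ('a \<Rightarrow>\<^sub>0 'k)
    \<Rightarrow> ('b \<Rightarrow>\<^sub>0 'k) \<Rightarrow> ('c \<Rightarrow>\<^sub>0 'k)" where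
  "bilin_ext f p q = (\<Sum>a\<in>Poly_Mapping.keys p. \<Sum>b\<in>Poly_Mapping.keys q. smul (Poly_Mapping.lookup p a * Poly_Mapping.lookup q b) (f a b))"

text \<open>Tensor product of free modules: k[A] \<otimes> k[B] is identified with k[A \<times> B].\<close>
definition tens :: "('a \<Rightarrow>\<^sub>0 'k::comm_ring_1) \<Rightarrow> ('b \<Rightarrow>\<^sub>0 'k) \<Rightarrow> ('a \<times> 'b \<Rightarrow>\<^sub>0 'k)" where
  "tens p q = bilin_ext (\<lambda>a b. basis (a, b)) p q"

definition map_tens :: "(('a \<Rightarrow>\<^sub>0 'k::comm_ring_1) \<Rightarrow> ('a \<Rightarrow>\<^sub>0 'k))
    \<Rightarrow> (('b \<Rightarrow>\<^sub>0 'k) \<Rightarrow> ('b \<Rightarrow>\<^sub>0 'k)) \<Rightarrow> ('a \<times> 'b \<Rightarrow>\<^sub>0 'k) \<Rightarrow> ('a \<times> 'b \<Rightarrow>\<^sub>0 'k)" where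
  "map_tens f g P = lin_ext (\<lambda>(a, b). tens (f (basis a)) (g (basis b))) P"

lemma size_lastT_less:
  "size (lastT (a, as)) < Suc (size a + size_list (size_prod (\<lambda>_. 0) size) as)"
proof (cases "as = []")
  case True then show ?thesis by (simp add: lastT_def)
next
  case False
  obtain y t where yt: "last as = (y, t)" by fastforce
  then have "(y, t) \<in> set as" using False by (metis last_in_set)
  then have "size_prod (\<lambda>_. 0) size (y, t) \<le> size_list (size_prod (\<lambda>_. 0) size) as"
    by (rule size_list_estimation') simp
  then have "size t \<le> size_list (size_prod (\<lambda>_. 0) size) as" by simp
  then show ?thesis using False yt by (simp add: lastT_def)
qed

function tprod :: "'k::comm_ring_1 \<Rightarrow> 'x atree \<Rightarrow> 'x atree \<Rightarrow> ('k \<times> 'x atree) list" where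
  "tprod lam Leaf t = [(1, t)]"
| "tprod lam (Bp a as) Leaf = [(1, Bp a as)]"
| "tprod lam (Bp a as) (Bp b bs) =
     map (\<lambda>(c, t). (c, Bp t bs)) (tprod lam (Bp a as) b)
   @ map (\<lambda>(c, t). (c, bplusF (replaceLast (a, as) t))) (tprod lam (lastT (a, as)) (Bp b bs))
   @ map (\<lambda>(c, t). (lam * c, bplusF (glue (a, as) t (b, bs)))) (tprod lam (lastT (a, as)) b)"
  by pat_completeness auto
termination
proof (relation "measure (\<lambda>(_, s, t). size s + size t)")
  fix lam :: 'k and a :: "'x atree" and as bs b
  have h: "size (lastT (a, as)) < Suc (size a + size_list (size_prod (\<lambda>_. 0) size) as)"
    by (rule size_lastT_less)
  show "((lam, lastT (a, as), Bp b bs), lam, Bp a as, Bp b bs) \<in> measure (\<lambda>(_, s, t). size s + size t)"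
    using h by simp
  show "((lam, lastT (a, as), b), lam, Bp a as, Bp b bs) \<in> measure (\<lambda>(_, s, t). size s + size t)"
    using h by simp
qed auto

definition fprod :: "'k::comm_ring_1 \<Rightarrow> 'x aforest \<Rightarrow> 'x aforest \<Rightarrow> ('k \<times> 'x aforest) list" where
  "fprod lam F G = map (\<lambda>(c, t). (c, glue F t G)) (tprod lam (lastT F) (fst G))"

definition dprod :: "'k::comm_ring_1 \<Rightarrow> ('x aforest \<Rightarrow>\<^sub>0 'k) \<Rightarrow> ('x aforest \<Rightarrow>\<^sub>0 'k) \<Rightarrow> ('x aforest \<Rightarrow>\<^sub>0 'k)" where
  "dprod lam p q = bilin_ext (\<lambda>F G. linL (fprod lam F G)) p q"

definition Bplus :: "('x aforest \<Rightarrow>\<^sub>0 'k::comm_ring_1) \<Rightarrow> ('x aforest \<Rightarrow>\<^sub>0 'k)" where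
  "Bplus p = lin_ext (\<lambda>F. basis (treeF (bplusF F))) p"

definition dprod_tens :: "'k::comm_ring_1 \<Rightarrow> ('x aforest \<times> 'x aforest \<Rightarrow>\<^sub>0 'k)
    \<Rightarrow> ('x aforest \<times> 'x aforest \<Rightarrow>\<^sub>0 'k) \<Rightarrow> ('x aforest \<times> 'x aforest \<Rightarrow>\<^sub>0 'k)" where
  "dprod_tens lam P Q = bilin_ext (\<lambda>(a, b) (c, d).
      tens (dprod lam (basis a) (basis c)) (dprod lam (basis b) (basis d))) P Q"

text \<open>Pieces of an admissible subforest: a rooted subtree F_v (v non-leaf) or a
  decoration occurrence of x.\<close>
datatype 'x piece = PTree "'x atree" | PDec 'x

text \<open>Quotient words: chosen rooted subtrees replaced by a leaf, chosen decoration
  occurrences replaced by the formal symbol \<star> (encoded as None).\<close>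
datatype 'x qtree = QLeaf | QB "'x qtree" "('x option \<times> 'x qtree) list"

text \<open>Enumeration of all admissible subforests: each choice is listed once, as the
  list of its pieces in left-to-right planar order together with the quotient word.
  At a non-leaf vertex either the whole rooted subtree is chosen, or not (and we
  recurse into the children); every decoration occurrence not inside a chosen
  subtree is either chosen or not.\<close>
fun cutsT :: "'x atree \<Rightarrow> ('x piece list \<times> 'x qtree) list"
and cutsL :: "('x \<times> 'x atree) list \<Rightarrow> ('x piece list \<times> ('x option \<times> 'x qtree) list) list" where
  "cutsT Leaf = [([], QLeaf)]"
| "cutsT (Bp a as) = ([PTree (Bp a as)], QLeaf) #
     concat (map (\<lambda>(p, q). map (\<lambda>(p', qs). (p @ p', QB q qs)) (cutsL as)) (cutsT a))"
| "cutsL [] = [([], [])]"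
| "cutsL ((x, t) # r) =
     concat (map (\<lambda>(d, s). concat (map (\<lambda>(p, q). map (\<lambda>(p', qr). (d @ p @ p', (s, q) # qr))
        (cutsL r)) (cutsT t))) [([PDec x], None), ([], Some x)])"

definition cutsF :: "'x aforest \<Rightarrow> ('x piece list \<times> ('x qtree \<times> ('x option \<times> 'x qtree) list)) list" where
  "cutsF F = concat (map (\<lambda>(p, q). map (\<lambda>(p', qs). (p @ p', (q, qs))) (cutsL (snd F))) (cutsT (fst F)))"

definition hat :: "'x piece \<Rightarrow> ('x aforest \<Rightarrow>\<^sub>0 'k::comm_ring_1)" where
  "hat P = (case P of PTree t \<Rightarrow> basis (treeF t) | PDec x \<Rightarrow> basis (decF x))"

definition cl :: "'k::comm_ring_1 \<Rightarrow> 'x piece list \<Rightarrow> ('x aforest \<Rightarrow>\<^sub>0 'k)" where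
  "cl lam ps = foldl (dprod lam) (basis bulletF) (map hat ps)"

definition csym :: "'x option \<Rightarrow> ('x aforest \<Rightarrow>\<^sub>0 'k::comm_ring_1)" where
  "csym s = (case s of None \<Rightarrow> basis bulletF | Some x \<Rightarrow> basis (decF x))"

fun evalQT :: "'k::comm_ring_1 \<Rightarrow> 'x qtree \<Rightarrow> ('x aforest \<Rightarrow>\<^sub>0 'k)"
and evalQL :: "'k::comm_ring_1 \<Rightarrow> ('x aforest \<Rightarrow>\<^sub>0 'k) \<Rightarrow> ('x option \<times> 'x qtree) list \<Rightarrow> ('x aforest \<Rightarrow>\<^sub>0 'k)" where
  "evalQT lam QLeaf = basis bulletF"
| "evalQT lam (QB q qs) = Bplus (evalQL lam (evalQT lam q) qs)"
| "evalQL lam acc [] = acc"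
| "evalQL lam acc ((s, t) # r) = evalQL lam (dprod lam (dprod lam acc (csym s)) (evalQT lam t)) r"

definition evalQW :: "'k::comm_ring_1 \<Rightarrow> 'x qtree \<times> ('x option \<times> 'x qtree) list \<Rightarrow> ('x aforest \<Rightarrow>\<^sub>0 'k)" where
  "evalQW lam W = evalQL lam (evalQT lam (fst W)) (snd W)"

definition deltaF :: "'k::comm_ring_1 \<Rightarrow> 'x aforest \<Rightarrow> ('x aforest \<times> 'x aforest \<Rightarrow>\<^sub>0 'k)" where
  "deltaF lam F = sum_list (map (\<lambda>(ps, W). tens (cl lam ps) (evalQW lam W)) (cutsF F))"

definition Delta_a :: "'k::comm_ring_1 \<Rightarrow> ('x aforest \<Rightarrow>\<^sub>0 'k) \<Rightarrow> ('x aforest \<times> 'x aforest \<Rightarrow>\<^sub>0 'k)" where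
  "Delta_a lam p = lin_ext (deltaF lam) p"

end

theory Submission
  imports Defs
begin

(* Everything is (bi)linear, so it suffices to consider basis forests, and all statements are
  proved by induction on size.  A forest T1 x1 T2 ... x(k-1) Tk is the product
  T1 \<diamond> (\<bullet>x1\<bullet>) \<diamond> T2 \<diamond> ... \<diamond> Tk, and an admissible subforest of it is an independent choice of an
  admissible subforest of every Ti and of a set of gap decorations.  Hence, once \<diamond> is known to be
  associative, Delta_a of a forest is the product of the Delta_a(Ti) and of the
  Delta_a(\<bullet>xi\<bullet>) = \<bullet>xi\<bullet> \<otimes> \<bullet> + \<bullet> \<otimes> \<bullet>xi\<bullet>.  An admissible subforest of a tree B+(F) is either the
  whole tree or one of F, which is the cocycle identity (3).
  The product of two forests only merges the last tree of the first with the first tree of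
  the second, so associativity and (4) both reduce to products of trees B+(S) \<diamond> B+(T).  There
  B+ and id \<otimes> B+ are Rota-Baxter operators of weight \<lambda>, and by the cocycle identity the
  Rota-Baxter expansions of both sides match term by term, using the induction hypothesis
  for the three smaller products. *)

section \<open>Linear and bilinear maps of free modules\<close>

lemma lookup_smul [simp]: "Poly_Mapping.lookup (smul c p) a = c * Poly_Mapping.lookup p a"
  unfolding smul_def by (simp add: Poly_Mapping.map.rep_eq when_def)

lemma smul_add_right: "smul c (p + q) = smul c p + smul c q"
  by (rule poly_mapping_eqI) (simp add: lookup_add distrib_left)

lemma smul_add_left: "smul (c + d) p = smul c p + smul d p"
  by (rule poly_mapping_eqI) (simp add: lookup_add distrib_right)

lemma smul_smul [simp]: "smul c (smul d p) = smul (c * d) p"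
  by (rule poly_mapping_eqI) (simp add: mult.assoc)

lemma smul_one [simp]: "smul 1 p = p"
  by (rule poly_mapping_eqI) simp

lemma smul_zero_left [simp]: "smul 0 p = 0"
  by (rule poly_mapping_eqI) simp

lemma smul_zero_right [simp]: "smul c 0 = 0"
  by (rule poly_mapping_eqI) simp

lemma smul_basis: "smul c (basis a) = Poly_Mapping.single a c"
  by (rule poly_mapping_eqI) (simp add: basis_def lookup_single when_def)

lemma smul_sum: "smul c (sum f A) = (\<Sum>x\<in>A. smul c (f x))"
  by (rule poly_mapping_eqI) (simp add: lookup_sum sum_distrib_left)

lemma sum_single_lookup:
  "(\<Sum>a\<in>Poly_Mapping.keys p. Poly_Mapping.single a (Poly_Mapping.lookup p a)) = p"
  by (rule poly_mapping_eqI) (simp add: lookup_sum lookup_single when_def in_keys_iff)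

lemma lin_ext_eq_sum_superset:
  assumes "finite S" "Poly_Mapping.keys p \<subseteq> S"
  shows "lin_ext f p = (\<Sum>a\<in>S. smul (Poly_Mapping.lookup p a) (f a))"
  unfolding lin_ext_def
  by (rule sum.mono_neutral_left) (use assms in \<open>auto simp: in_keys_iff\<close>)

lemma lin_ext_add: "lin_ext f (p + q) = lin_ext f p + lin_ext f q"
proof -
  let ?S = "Poly_Mapping.keys p \<union> Poly_Mapping.keys q"
  have "finite ?S" "Poly_Mapping.keys (p + q) \<subseteq> ?S"
    by (simp_all add: keys_add)
  then show ?thesis
    by (simp add: lin_ext_eq_sum_superset[of ?S] lookup_add smul_add_left sum.distrib)
qed

lemma lin_ext_smul: "lin_ext f (smul c p) = smul c (lin_ext f p)"
proof -
  have "Poly_Mapping.keys (smul c p) \<subseteq> Poly_Mapping.keys p"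
    by (auto simp: in_keys_iff)
  then have "lin_ext f (smul c p) = (\<Sum>a\<in>Poly_Mapping.keys p. smul (c * Poly_Mapping.lookup p a) (f a))"
    by (simp add: lin_ext_eq_sum_superset[OF finite_keys])
  then show ?thesis
    by (simp add: lin_ext_def smul_sum)
qed

lemma lin_ext_single: "lin_ext f (Poly_Mapping.single a c) = smul c (f a)"
  by (cases "c = 0") (simp_all add: lin_ext_def)

lemma lin_ext_basis [simp]: "lin_ext f (basis a) = f a"
  by (simp add: basis_def lin_ext_single)

lemma lin_ext_zero [simp]: "lin_ext f 0 = 0"
  by (simp add: lin_ext_def)

definition linear_pm :: "(('a \<Rightarrow>\<^sub>0 'k::comm_ring_1) \<Rightarrow> ('b \<Rightarrow>\<^sub>0 'k)) \<Rightarrow> bool" where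
  "linear_pm L \<longleftrightarrow> (\<forall>p q. L (p + q) = L p + L q) \<and> (\<forall>c p. L (smul c p) = smul c (L p))"

lemma linear_pmI:
  assumes "\<And>p q. L (p + q) = L p + L q" "\<And>c p. L (smul c p) = smul c (L p)"
  shows "linear_pm L"
  using assms unfolding linear_pm_def by blast

lemma linear_pm_add: "linear_pm L \<Longrightarrow> L (p + q) = L p + L q"
  unfolding linear_pm_def by blast

lemma linear_pm_smul: "linear_pm L \<Longrightarrow> L (smul c p) = smul c (L p)"
  unfolding linear_pm_def by blast

lemma linear_pm_zero: "linear_pm L \<Longrightarrow> L 0 = 0"
  using linear_pm_smul[of L 0 0] by simp

lemma linear_pm_sum: "linear_pm L \<Longrightarrow> L (sum f A) = (\<Sum>x\<in>A. L (f x))"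
  by (induction A rule: infinite_finite_induct) (simp_all add: linear_pm_zero linear_pm_add)

lemma linear_pm_sum_list:
  "linear_pm L \<Longrightarrow> L (sum_list (map f xs)) = sum_list (map (\<lambda>x. L (f x)) xs)"
  by (induction xs) (simp_all add: linear_pm_zero linear_pm_add)

lemma linear_pm_lin_ext: "linear_pm (lin_ext f)"
  by (rule linear_pmI) (simp_all add: lin_ext_add lin_ext_smul)

lemma linear_pm_ident: "linear_pm (\<lambda>p. p)"
  unfolding linear_pm_def by simp

lemma linear_pm_compose: "linear_pm L \<Longrightarrow> linear_pm M \<Longrightarrow> linear_pm (\<lambda>p. L (M p))"
  unfolding linear_pm_def by simp

lemma linear_pm_plus: "linear_pm L \<Longrightarrow> linear_pm M \<Longrightarrow> linear_pm (\<lambda>p. L p + M p)"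
  unfolding linear_pm_def by (simp add: smul_add_right add_ac)

lemma linear_pm_scale: "linear_pm L \<Longrightarrow> linear_pm (\<lambda>p. smul c (L p))"
  unfolding linear_pm_def by (simp add: smul_add_right mult.commute)

lemma linear_pm_eq_lin_ext:
  assumes "linear_pm L"
  shows "L p = lin_ext (\<lambda>a. L (basis a)) p"
proof -
  have "L p = L (\<Sum>a\<in>Poly_Mapping.keys p. smul (Poly_Mapping.lookup p a) (basis a))"
    by (simp add: smul_basis sum_single_lookup)
  also have "\<dots> = lin_ext (\<lambda>a. L (basis a)) p"
    by (simp add: linear_pm_sum[OF assms] linear_pm_smul[OF assms] lin_ext_def)
  finally show ?thesis .
qed

lemma linear_pm_eq_basis:
  assumes "linear_pm L" "linear_pm M" "\<And>a. L (basis a) = M (basis a)"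
  shows "L p = M p"
  using linear_pm_eq_lin_ext[OF assms(1), of p] linear_pm_eq_lin_ext[OF assms(2), of p] assms(3)
  by simp

lemma lin_ext_compose: "linear_pm L \<Longrightarrow> L (lin_ext f p) = lin_ext (\<lambda>a. L (f a)) p"
  by (rule linear_pm_eq_basis[where L="\<lambda>p. L (lin_ext f p)"])
     (simp_all add: linear_pm_compose linear_pm_lin_ext)

definition bilinear_pm ::
    "(('a \<Rightarrow>\<^sub>0 'k::comm_ring_1) \<Rightarrow> ('b \<Rightarrow>\<^sub>0 'k) \<Rightarrow> ('c \<Rightarrow>\<^sub>0 'k)) \<Rightarrow> bool" where
  "bilinear_pm B \<longleftrightarrow> (\<forall>q. linear_pm (\<lambda>p. B p q)) \<and> (\<forall>p. linear_pm (B p))"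

lemma bilinear_pm_linear_left: "bilinear_pm B \<Longrightarrow> linear_pm (\<lambda>p. B p q)"
  unfolding bilinear_pm_def by blast

lemma bilinear_pm_linear_right: "bilinear_pm B \<Longrightarrow> linear_pm (B p)"
  unfolding bilinear_pm_def by blast

lemma bilin_ext_eq_lin_ext: "bilin_ext f p q = lin_ext (\<lambda>a. lin_ext (f a) q) p"
  by (simp add: bilin_ext_def lin_ext_def smul_sum mult.commute)

lemma bilin_ext_eq_lin_ext_swap: "bilin_ext f p q = lin_ext (\<lambda>b. lin_ext (\<lambda>a. f a b) p) q"
  unfolding bilin_ext_def lin_ext_def smul_sum
  by (subst sum.swap) (simp add: mult.commute)

lemma lin_ext_swap:
  "lin_ext (\<lambda>a. lin_ext (f a) q) p = lin_ext (\<lambda>b. lin_ext (\<lambda>a. f a b) p) q"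
  using bilin_ext_eq_lin_ext[of f p q] bilin_ext_eq_lin_ext_swap[of f p q] by simp

lemma bilinear_pm_bilin_ext: "bilinear_pm (bilin_ext f)"
  unfolding bilinear_pm_def
proof (intro allI conjI)
  show "linear_pm (\<lambda>p. bilin_ext f p q)" for q
    unfolding bilin_ext_eq_lin_ext by (rule linear_pm_lin_ext)
  show "linear_pm (bilin_ext f p)" for p
    unfolding bilin_ext_eq_lin_ext_swap[abs_def] by (rule linear_pm_lin_ext)
qed

lemma bilin_ext_basis [simp]: "bilin_ext f (basis a) (basis b) = f a b"
  by (simp add: bilin_ext_eq_lin_ext)

lemma bilinear_pm_eq_basis:
  assumes "bilinear_pm B" "bilinear_pm C" "\<And>a b. B (basis a) (basis b) = C (basis a) (basis b)"
  shows "B p q = C p q"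
proof -
  have "B p' (basis b) = C p' (basis b)" for p' b
    by (rule linear_pm_eq_basis[where L="\<lambda>p. B p (basis b)"])
       (use assms in \<open>simp_all add: bilinear_pm_linear_left\<close>)
  then show ?thesis
    by (rule linear_pm_eq_basis[where L="B p", rotated 2])
       (use assms in \<open>simp_all add: bilinear_pm_linear_right\<close>)
qed

lemma trilinear_pm_eq_basis:
  assumes "\<And>r. bilinear_pm (\<lambda>p q. T p q r)" "\<And>r. bilinear_pm (\<lambda>p q. U p q r)"
    and "\<And>p q. linear_pm (T p q)" "\<And>p q. linear_pm (U p q)"
    and "\<And>a b c. T (basis a) (basis b) (basis c) = U (basis a) (basis b) (basis c)"
  shows "T p q r = U p q r"
proof -
  have "T p q (basis c) = U p q (basis c)" for c
    by (rule bilinear_pm_eq_basis[where B="\<lambda>p q. T p q (basis c)"]) (use assms in auto)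
  then show ?thesis
    by (rule linear_pm_eq_basis[where L="T p q", rotated 2]) (use assms in auto)
qed

lemma bilinear_pm_compose_left:
  "bilinear_pm B \<Longrightarrow> linear_pm L \<Longrightarrow> bilinear_pm (\<lambda>p q. B (L p) q)"
  unfolding bilinear_pm_def by (auto intro: linear_pm_compose[where L="\<lambda>x. B x _"])

lemma bilinear_pm_compose_right:
  "bilinear_pm B \<Longrightarrow> linear_pm R \<Longrightarrow> bilinear_pm (\<lambda>p q. B p (R q))"
  unfolding bilinear_pm_def by (auto intro: linear_pm_compose[where L="B _"])

lemma bilinear_pm_postcompose:
  "bilinear_pm B \<Longrightarrow> linear_pm L \<Longrightarrow> bilinear_pm (\<lambda>p q. L (B p q))"
  unfolding bilinear_pm_def by (auto intro: linear_pm_compose[where L=L])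

lemma bilinear_pm_plus:
  "bilinear_pm B \<Longrightarrow> bilinear_pm C \<Longrightarrow> bilinear_pm (\<lambda>p q. B p q + C p q)"
  unfolding bilinear_pm_def by (auto intro: linear_pm_plus)

lemma bilinear_pm_scale: "bilinear_pm B \<Longrightarrow> bilinear_pm (\<lambda>p q. smul c (B p q))"
  unfolding bilinear_pm_def by (auto intro: linear_pm_scale)

lemma smul_sum_list: "smul c (sum_list xs) = sum_list (map (smul c) xs)"
  by (induction xs) (simp_all add: smul_add_right)

lemma linL_eq_sum_list: "linL l = sum_list (map (\<lambda>(c, a). smul c (basis a)) l)"
  unfolding linL_def by (simp add: case_prod_unfold smul_basis)

lemma bilinear_pm_dprod: "bilinear_pm (dprod lam)"
  unfolding dprod_def[abs_def] by (rule bilinear_pm_bilin_ext)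

lemmas linear_dprod_left = bilinear_pm_linear_left[OF bilinear_pm_dprod]
lemmas linear_dprod_right = bilinear_pm_linear_right[OF bilinear_pm_dprod]
lemmas dprod_add_left = linear_pm_add[OF linear_dprod_left]
lemmas dprod_add_right = linear_pm_add[OF linear_dprod_right]
lemmas dprod_smul_left = linear_pm_smul[OF linear_dprod_left]
lemmas dprod_smul_right = linear_pm_smul[OF linear_dprod_right]

lemma bilinear_pm_tens: "bilinear_pm tens"
  unfolding tens_def[abs_def] by (rule bilinear_pm_bilin_ext)

lemmas linear_tens_left = bilinear_pm_linear_left[OF bilinear_pm_tens]
lemmas linear_tens_right = bilinear_pm_linear_right[OF bilinear_pm_tens]
lemmas tens_add_right = linear_pm_add[OF linear_tens_right]
lemmas tens_smul_right = linear_pm_smul[OF linear_tens_right]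

lemma tens_basis: "tens (basis a) (basis b) = basis (a, b)"
  by (simp add: tens_def)

lemma bilinear_pm_dprod_tens: "bilinear_pm (dprod_tens lam)"
  unfolding dprod_tens_def[abs_def] by (rule bilinear_pm_bilin_ext)

lemmas linear_dprod_tens_left = bilinear_pm_linear_left[OF bilinear_pm_dprod_tens]
lemmas linear_dprod_tens_right = bilinear_pm_linear_right[OF bilinear_pm_dprod_tens]
lemmas dprod_tens_add_left = linear_pm_add[OF linear_dprod_tens_left]
lemmas dprod_tens_add_right = linear_pm_add[OF linear_dprod_tens_right]

lemma linear_pm_Bplus: "linear_pm Bplus"
  unfolding Bplus_def[abs_def] by (rule linear_pm_lin_ext)

lemmas Bplus_add = linear_pm_add[OF linear_pm_Bplus]
lemmas Bplus_smul = linear_pm_smul[OF linear_pm_Bplus]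

lemma Bplus_basis: "Bplus (basis F) = basis (treeF (bplusF F))"
  by (simp add: Bplus_def)

lemma basis_treeF_Bp: "basis (treeF (Bp a as)) = Bplus (basis (a, as))"
  by (simp add: Bplus_basis bplusF_def)

lemma linear_pm_Delta_a: "linear_pm (Delta_a lam)"
  unfolding Delta_a_def[abs_def] by (rule linear_pm_lin_ext)

lemmas Delta_a_add = linear_pm_add[OF linear_pm_Delta_a]
lemmas Delta_a_smul = linear_pm_smul[OF linear_pm_Delta_a]

lemma Delta_a_basis: "Delta_a lam (basis F) = deltaF lam F"
  by (simp add: Delta_a_def)

lemma bplusF_pair [simp]: "bplusF (a, as) = Bp a as"
  by (simp add: bplusF_def)

lemma treeF_Leaf: "treeF Leaf = bulletF"
  by (simp add: treeF_def bulletF_def)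

lemma lastT_bulletF [simp]: "lastT bulletF = Leaf"
  by (simp add: lastT_def bulletF_def)

lemma fst_bulletF [simp]: "fst bulletF = Leaf"
  by (simp add: bulletF_def)

lemma snd_bulletF [simp]: "snd bulletF = []"
  by (simp add: bulletF_def)

lemma lastT_treeF [simp]: "lastT (treeF s) = s"
  by (simp add: lastT_def treeF_def)

lemma fst_treeF [simp]: "fst (treeF s) = s"
  by (simp add: treeF_def)

lemma snd_treeF [simp]: "snd (treeF s) = []"
  by (simp add: treeF_def)

lemma glue_bulletF_left: "glue bulletF (fst G) G = G"
  by (simp add: glue_def replaceLast_def bulletF_def)

lemma glue_bulletF_right: "glue F (lastT F) bulletF = F"
  by (cases F) (auto simp: glue_def replaceLast_def bulletF_def lastT_def)

lemma glue_treeF_left [simp]: "glue (treeF s) t G = (t, snd G)"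
  by (simp add: glue_def replaceLast_def treeF_def)

lemma glue_treeF_right [simp]: "glue F t (treeF s) = replaceLast F t"
  by (simp add: glue_def treeF_def)

lemma replaceLast_treeF [simp]: "replaceLast (treeF s) t = treeF t"
  by (simp add: replaceLast_def treeF_def)

lemma lastT_replaceLast [simp]: "lastT (replaceLast F t) = t"
  by (simp add: lastT_def replaceLast_def)

lemma glue_replaceLast [simp]: "glue (replaceLast F t) t' G = glue F t' G"
  by (simp add: glue_def replaceLast_def)

lemma glue_fst_irrelevant: "glue F t' (t, snd G) = glue F t' G"
  by (simp add: glue_def)

lemma lastT_glue: "snd G \<noteq> [] \<Longrightarrow> lastT (glue F t G) = lastT G"
  by (simp add: lastT_def glue_def)

lemma fst_glue: "snd F \<noteq> [] \<Longrightarrow> fst (glue F t G) = fst F"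
  by (simp add: glue_def replaceLast_def)

lemma glue_glue: "snd G \<noteq> [] \<Longrightarrow> glue (glue F t G) t' H = glue F t (glue G t' H)"
  by (cases "snd F = []") (auto simp: glue_def replaceLast_def butlast_append)

definition fsize :: "'x aforest \<Rightarrow> nat" where
  "fsize F = size (bplusF F)"

lemma fsize_treeF: "fsize (treeF t) = Suc (size t)"
  by (simp add: fsize_def treeF_def bplusF_def)

lemma fsize_treeF_Bp: "fsize (treeF (Bp a as)) = Suc (fsize (a, as))"
  by (simp add: fsize_def treeF_def)

lemma fsize_lastT: "fsize (treeF (lastT F)) \<le> fsize F"
  using size_lastT_less[of "fst F" "snd F"] by (simp add: fsize_treeF fsize_def bplusF_def)

lemma fsize_fst: "fsize (treeF (fst F)) \<le> fsize F"
  by (simp add: fsize_treeF fsize_def bplusF_def)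

section \<open>The product \<open>\<diamond>\<close>: units, Rota-Baxter identity, associativity\<close>

definition tprod_lin :: "'k::comm_ring_1 \<Rightarrow> 'x atree \<Rightarrow> 'x atree \<Rightarrow> ('x atree \<Rightarrow>\<^sub>0 'k)" where
  "tprod_lin lam s t = linL (tprod lam s t)"

definition glue_lin :: "'x aforest \<Rightarrow> 'x aforest \<Rightarrow> ('x atree \<Rightarrow>\<^sub>0 'k::comm_ring_1) \<Rightarrow> ('x aforest \<Rightarrow>\<^sub>0 'k)" where
  "glue_lin F G = lin_ext (\<lambda>t. basis (glue F t G))"

definition treeF_lin :: "('x atree \<Rightarrow>\<^sub>0 'k::comm_ring_1) \<Rightarrow> ('x aforest \<Rightarrow>\<^sub>0 'k)" where
  "treeF_lin = lin_ext (\<lambda>t. basis (treeF t))"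

lemma dprod_basis_glue:
  "dprod lam (basis F) (basis G) = glue_lin F G (tprod_lin lam (lastT F) (fst G))"
  unfolding dprod_def fprod_def tprod_lin_def glue_lin_def linL_eq_sum_list
  by (simp add: linear_pm_sum_list[OF linear_pm_lin_ext] lin_ext_smul case_prod_unfold comp_def)

lemma dprod_treeF: "dprod lam (basis (treeF s)) (basis (treeF t)) = treeF_lin (tprod_lin lam s t)"
  by (simp add: dprod_basis_glue glue_lin_def treeF_lin_def)

lemma glue_lin_eq_treeF_lin:
  "glue_lin F G r = lin_ext (\<lambda>H. basis (glue F (fst H) G)) (treeF_lin r)"
  by (simp add: glue_lin_def treeF_lin_def lin_ext_compose[OF linear_pm_lin_ext])

lemma linear_pm_treeF_lin: "linear_pm treeF_lin"
  unfolding treeF_lin_def by (rule linear_pm_lin_ext)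

lemma dprod_treeF_lin_left:
  "dprod lam (treeF_lin r) (basis (treeF u)) = treeF_lin (lin_ext (\<lambda>v. tprod_lin lam v u) r)"
proof -
  have "dprod lam (treeF_lin r) (basis (treeF u)) =
      lin_ext (\<lambda>v. dprod lam (basis (treeF v)) (basis (treeF u))) r"
    by (simp add: treeF_lin_def lin_ext_compose[OF linear_dprod_left])
  then show ?thesis
    by (simp add: dprod_treeF lin_ext_compose[OF linear_pm_treeF_lin])
qed

lemma dprod_treeF_lin_right:
  "dprod lam (basis (treeF s)) (treeF_lin r) = treeF_lin (lin_ext (tprod_lin lam s) r)"
proof -
  have "dprod lam (basis (treeF s)) (treeF_lin r) =
      lin_ext (\<lambda>v. dprod lam (basis (treeF s)) (basis (treeF v))) r"
    by (simp add: treeF_lin_def lin_ext_compose[OF linear_dprod_right])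
  then show ?thesis
    by (simp add: dprod_treeF lin_ext_compose[OF linear_pm_treeF_lin])
qed

lemma tprod_lin_Leaf_left: "tprod_lin lam Leaf t = basis t"
  by (simp add: tprod_lin_def linL_def basis_def)

lemma tprod_lin_Leaf_right: "tprod_lin lam t Leaf = basis t"
  by (cases t) (simp_all add: tprod_lin_def linL_def basis_def)

lemma dprod_bulletF_left: "dprod lam (basis bulletF) p = p"
  by (rule linear_pm_eq_basis[OF linear_dprod_right linear_pm_ident])
     (simp add: dprod_basis_glue tprod_lin_Leaf_left glue_lin_def glue_bulletF_left)

lemma dprod_bulletF_right: "dprod lam p (basis bulletF) = p"
  by (rule linear_pm_eq_basis[OF linear_dprod_left linear_pm_ident])
     (simp add: dprod_basis_glue tprod_lin_Leaf_right glue_lin_def glue_bulletF_right)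

lemma Bplus_rota_baxter_basis:
  "dprod lam (Bplus (basis S)) (Bplus (basis T)) =
   Bplus (dprod lam (Bplus (basis S)) (basis T) + dprod lam (basis S) (Bplus (basis T))
          + smul lam (dprod lam (basis S) (basis T)))"
proof -
  obtain a as b bs where S: "S = (a, as)" and T: "T = (b, bs)" by fastforce
  show ?thesis
    unfolding S T Bplus_basis bplusF_pair dprod_def fprod_def
    by (simp add: Bplus_add Bplus_smul Bplus_basis linL_eq_sum_list smul_sum_list
          linear_pm_sum_list[OF linear_pm_Bplus] case_prod_unfold comp_def bplusF_def add.assoc
          flip: treeF_def)
qed

lemma Bplus_rota_baxter:
  "dprod lam (Bplus p) (Bplus q) =
   Bplus (dprod lam (Bplus p) q + dprod lam p (Bplus q) + smul lam (dprod lam p q))"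
proof (rule bilinear_pm_eq_basis[where B="\<lambda>p q. dprod lam (Bplus p) (Bplus q)"])
  show "bilinear_pm (\<lambda>p q. dprod lam (Bplus p) (Bplus q))"
    by (rule bilinear_pm_compose_left[OF bilinear_pm_compose_right[OF bilinear_pm_dprod linear_pm_Bplus]
          linear_pm_Bplus])
  show "bilinear_pm (\<lambda>p q. Bplus (dprod lam (Bplus p) q + dprod lam p (Bplus q) + smul lam (dprod lam p q)))"
    by (intro bilinear_pm_postcompose[OF _ linear_pm_Bplus] bilinear_pm_plus bilinear_pm_scale
        bilinear_pm_compose_left[OF bilinear_pm_dprod] bilinear_pm_compose_right[OF bilinear_pm_dprod]
        bilinear_pm_dprod linear_pm_Bplus)
qed (rule Bplus_rota_baxter_basis)

lemma dprod_assoc_Bplus: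
  assumes "dprod lam (dprod lam (Bplus p) (Bplus q)) r = dprod lam (Bplus p) (dprod lam (Bplus q) r)"
    and "dprod lam (dprod lam (Bplus p) q) (Bplus r) = dprod lam (Bplus p) (dprod lam q (Bplus r))"
    and "dprod lam (dprod lam p (Bplus q)) (Bplus r) = dprod lam p (dprod lam (Bplus q) (Bplus r))"
    and "dprod lam (dprod lam (Bplus p) q) r = dprod lam (Bplus p) (dprod lam q r)"
    and "dprod lam (dprod lam p (Bplus q)) r = dprod lam p (dprod lam (Bplus q) r)"
    and "dprod lam (dprod lam p q) (Bplus r) = dprod lam p (dprod lam q (Bplus r))"
    and "dprod lam (dprod lam p q) r = dprod lam p (dprod lam q r)"
  shows "dprod lam (dprod lam (Bplus p) (Bplus q)) (Bplus r) =
    dprod lam (Bplus p) (dprod lam (Bplus q) (Bplus r))"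
proof -
  define Z where "Z = dprod lam (Bplus p) q + dprod lam p (Bplus q) + smul lam (dprod lam p q)"
  define W where "W = dprod lam (Bplus q) r + dprod lam q (Bplus r) + smul lam (dprod lam q r)"
  have pq: "dprod lam (Bplus p) (Bplus q) = Bplus Z"
    unfolding Z_def by (rule Bplus_rota_baxter)
  have qr: "dprod lam (Bplus q) (Bplus r) = Bplus W"
    unfolding W_def by (rule Bplus_rota_baxter)
  have L: "dprod lam (dprod lam (Bplus p) (Bplus q)) (Bplus r) =
      Bplus (dprod lam (dprod lam (Bplus p) (Bplus q)) r + dprod lam Z (Bplus r) + smul lam (dprod lam Z r))"
    unfolding pq by (rule Bplus_rota_baxter)
  have R: "dprod lam (Bplus p) (dprod lam (Bplus q) (Bplus r)) =
      Bplus (dprod lam (Bplus p) W + dprod lam p (dprod lam (Bplus q) (Bplus r)) + smul lam (dprod lam p W))"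
    unfolding qr by (rule Bplus_rota_baxter)
  show ?thesis
    unfolding L R Z_def W_def
    by (simp add: dprod_add_left dprod_add_right dprod_smul_left dprod_smul_right assms
        smul_add_right add_ac)
qed

lemma dprod_assoc_treeF:
  fixes lam :: "'k::comm_ring_1" and s t u :: "'x atree"
  assumes IH: "\<And>F1 F2 F3 :: 'x aforest.
      fsize F1 + fsize F2 + fsize F3 < fsize (treeF s) + fsize (treeF t) + fsize (treeF u) \<Longrightarrow>
      dprod lam (dprod lam (basis F1) (basis F2)) (basis F3) = dprod lam (basis F1) (dprod lam (basis F2) (basis F3))"
  shows "dprod lam (dprod lam (basis (treeF s)) (basis (treeF t))) (basis (treeF u)) =
    dprod lam (basis (treeF s)) (dprod lam (basis (treeF t)) (basis (treeF u)))"
proof (cases "s = Leaf \<or> t = Leaf \<or> u = Leaf")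
  case True
  then show ?thesis
    by (auto simp: treeF_Leaf dprod_bulletF_left dprod_bulletF_right)
next
  case False
  then obtain a as b bs c cs where s: "s = Bp a as" and t: "t = Bp b bs" and u: "u = Bp c cs"
    by (metis atree.exhaust)
  show ?thesis
    unfolding s t u basis_treeF_Bp
    by (rule dprod_assoc_Bplus)
       (unfold basis_treeF_Bp[symmetric], (rule IH, simp add: s t u fsize_treeF_Bp)+)
qed

lemma dprod_dprod_basis_left:
  "dprod lam (dprod lam (basis F1) (basis F2)) (basis F3) =
    lin_ext (\<lambda>t. dprod lam (basis (glue F1 t F2)) (basis F3)) (tprod_lin lam (lastT F1) (fst F2))"
  by (simp add: dprod_basis_glue[of lam F1 F2] glue_lin_def lin_ext_compose[OF linear_dprod_left])

lemma dprod_dprod_basis_right: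
  "dprod lam (basis F1) (dprod lam (basis F2) (basis F3)) =
    lin_ext (\<lambda>t. dprod lam (basis F1) (basis (glue F2 t F3))) (tprod_lin lam (lastT F2) (fst F3))"
  by (simp add: dprod_basis_glue[of lam F2 F3] glue_lin_def lin_ext_compose[OF linear_dprod_right])

(* With at least two trees in F2, the two products act on different trees of F2 and commute. *)
lemma dprod_assoc_basis_forest_middle:
  assumes "snd F2 \<noteq> []"
  shows "dprod lam (dprod lam (basis F1) (basis F2)) (basis F3) =
    dprod lam (basis F1) (dprod lam (basis F2) (basis F3))"
proof -
  have "dprod lam (basis (glue F1 t F2)) (basis F3) =
      lin_ext (\<lambda>t'. basis (glue F1 t (glue F2 t' F3))) (tprod_lin lam (lastT F2) (fst F3))" for t
    by (simp add: dprod_basis_glue glue_lin_def lastT_glue[OF assms] glue_glue[OF assms])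
  moreover have "dprod lam (basis F1) (basis (glue F2 t' F3)) =
      lin_ext (\<lambda>t. basis (glue F1 t (glue F2 t' F3))) (tprod_lin lam (lastT F1) (fst F2))" for t'
    by (simp add: dprod_basis_glue glue_lin_def fst_glue[OF assms])
  ultimately show ?thesis
    unfolding dprod_dprod_basis_left dprod_dprod_basis_right
    by (simp only: lin_ext_swap[of _ "tprod_lin lam (lastT F2) (fst F3)"])
qed

lemma dprod_assoc_basis_tree_middle:
  fixes lam :: "'k::comm_ring_1" and F1 F3 :: "'x aforest"
  assumes "dprod lam (dprod lam (basis (treeF (lastT F1))) (basis (treeF b))) (basis (treeF (fst F3))) =
    dprod lam (basis (treeF (lastT F1))) (dprod lam (basis (treeF b)) (basis (treeF (fst F3))))"
  shows "dprod lam (dprod lam (basis F1) (basis (treeF b))) (basis F3) =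
    dprod lam (basis F1) (dprod lam (basis (treeF b)) (basis F3))"
proof -
  \<comment> \<open>Both sides are images under one linear map of the two bracketings of the three trees.\<close>
  define l u where "l = lastT F1" and "u = fst F3"
  define g where "g = (\<lambda>H :: 'x aforest. basis (glue F1 (fst H) F3) :: 'x aforest \<Rightarrow>\<^sub>0 'k)"
  have glue_lin_F1_F3: "glue_lin F1 F3 r = lin_ext g (treeF_lin r)" for r
    unfolding g_def by (rule glue_lin_eq_treeF_lin)
  have "dprod lam (dprod lam (basis F1) (basis (treeF b))) (basis F3) =
      lin_ext (\<lambda>t. glue_lin F1 F3 (tprod_lin lam t u)) (tprod_lin lam l b)"
    unfolding dprod_dprod_basis_left by (simp add: l_def u_def dprod_basis_glue glue_lin_def)
  also have "\<dots> = lin_ext g (treeF_lin (lin_ext (\<lambda>t. tprod_lin lam t u) (tprod_lin lam l b)))"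
    by (simp add: glue_lin_F1_F3 lin_ext_compose[OF linear_pm_treeF_lin]
        lin_ext_compose[OF linear_pm_lin_ext])
  also have "\<dots> = lin_ext g (dprod lam (dprod lam (basis (treeF l)) (basis (treeF b))) (basis (treeF u)))"
    by (simp add: dprod_treeF dprod_treeF_lin_left)
  also have "\<dots> = lin_ext g (dprod lam (basis (treeF l)) (dprod lam (basis (treeF b)) (basis (treeF u))))"
    using assms by (simp add: l_def u_def)
  also have "\<dots> = lin_ext g (treeF_lin (lin_ext (tprod_lin lam l) (tprod_lin lam b u)))"
    by (simp add: dprod_treeF dprod_treeF_lin_right)
  also have "\<dots> = lin_ext (\<lambda>t. glue_lin F1 F3 (tprod_lin lam l t)) (tprod_lin lam b u)"
    by (simp add: glue_lin_F1_F3 lin_ext_compose[OF linear_pm_treeF_lin]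
        lin_ext_compose[OF linear_pm_lin_ext])
  also have "\<dots> = dprod lam (basis F1) (dprod lam (basis (treeF b)) (basis F3))"
    unfolding dprod_dprod_basis_right
    by (simp add: l_def u_def dprod_basis_glue glue_lin_def glue_fst_irrelevant)
  finally show ?thesis .
qed

lemma dprod_assoc_basis:
  "dprod lam (dprod lam (basis F1) (basis F2)) (basis F3) =
    dprod lam (basis F1) (dprod lam (basis F2) (basis F3))"
proof (induction "fsize F1 + fsize F2 + fsize F3" arbitrary: F1 F2 F3 rule: less_induct)
  case less
  show ?case
  proof (cases "snd F2 = []")
    case True
    then obtain b where F2: "F2 = treeF b"
      by (cases F2) (simp add: treeF_def)
    have "fsize (treeF (lastT F1)) + fsize (treeF b) + fsize (treeF (fst F3))
        \<le> fsize F1 + fsize F2 + fsize F3"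
      using fsize_lastT[of F1] fsize_fst[of F3] by (simp add: F2)
    then have "dprod lam (dprod lam (basis (treeF (lastT F1))) (basis (treeF b))) (basis (treeF (fst F3))) =
        dprod lam (basis (treeF (lastT F1))) (dprod lam (basis (treeF b)) (basis (treeF (fst F3))))"
      by (intro dprod_assoc_treeF less) linarith
    then show ?thesis
      unfolding F2 by (rule dprod_assoc_basis_tree_middle)
  next
    case False
    then show ?thesis
      by (rule dprod_assoc_basis_forest_middle)
  qed
qed

lemma dprod_assoc: "dprod lam (dprod lam p q) r = dprod lam p (dprod lam q r)"
proof (rule trilinear_pm_eq_basis[where T="\<lambda>p q r. dprod lam (dprod lam p q) r"])
  show "bilinear_pm (\<lambda>p q. dprod lam (dprod lam p q) r)" for r
    by (rule bilinear_pm_postcompose[OF bilinear_pm_dprod linear_dprod_left])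
  show "bilinear_pm (\<lambda>p q. dprod lam p (dprod lam q r))" for r
    by (rule bilinear_pm_compose_right[OF bilinear_pm_dprod linear_dprod_left])
  show "linear_pm (dprod lam (dprod lam p q))" for p q
    by (rule linear_dprod_right)
  show "linear_pm (\<lambda>r. dprod lam p (dprod lam q r))" for p q
    by (rule linear_pm_compose[OF linear_dprod_right linear_dprod_right])
qed (rule dprod_assoc_basis)

lemma dprod_tens_tens: "dprod_tens lam (tens p q) (tens r s) = tens (dprod lam p r) (dprod lam q s)"
proof -
  have basis_right: "dprod_tens lam (tens p (basis b)) (tens r (basis d)) =
      tens (dprod lam p r) (dprod lam (basis b) (basis d))" for p r b d
  proof (rule bilinear_pm_eq_basis[where B="\<lambda>p r. dprod_tens lam (tens p (basis b)) (tens r (basis d))"])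
    show "bilinear_pm (\<lambda>p r. dprod_tens lam (tens p (basis b)) (tens r (basis d)))"
      by (rule bilinear_pm_compose_left[OF bilinear_pm_compose_right[OF bilinear_pm_dprod_tens
            linear_tens_left] linear_tens_left])
    show "bilinear_pm (\<lambda>p r. tens (dprod lam p r) (dprod lam (basis b) (basis d)))"
      by (rule bilinear_pm_postcompose[OF bilinear_pm_dprod linear_tens_left])
  qed (simp add: dprod_tens_def tens_basis)
  show ?thesis
  proof (rule bilinear_pm_eq_basis[where B="\<lambda>q s. dprod_tens lam (tens p q) (tens r s)"])
    show "bilinear_pm (\<lambda>q s. dprod_tens lam (tens p q) (tens r s))"
      by (rule bilinear_pm_compose_left[OF bilinear_pm_compose_right[OF bilinear_pm_dprod_tens
            linear_tens_right] linear_tens_right])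
    show "bilinear_pm (\<lambda>q s. tens (dprod lam p r) (dprod lam q s))"
      by (rule bilinear_pm_postcompose[OF bilinear_pm_dprod linear_tens_right])
  qed (rule basis_right)
qed

abbreviation unit_tens :: "'x aforest \<times> 'x aforest \<Rightarrow>\<^sub>0 'k::comm_ring_1" where
  "unit_tens \<equiv> tens (basis bulletF) (basis bulletF)"

lemma dprod_tens_unit_left: "dprod_tens lam unit_tens X = X"
proof (rule linear_pm_eq_basis[OF linear_dprod_tens_right linear_pm_ident])
  fix ab :: "'x aforest \<times> 'x aforest"
  show "dprod_tens lam unit_tens (basis ab) = basis ab"
    by (cases ab) (simp add: tens_basis[symmetric] dprod_tens_tens dprod_bulletF_left)
qed

lemma dprod_tens_unit_right: "dprod_tens lam X unit_tens = X"
proof (rule linear_pm_eq_basis[OF linear_dprod_tens_left linear_pm_ident])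
  fix ab :: "'x aforest \<times> 'x aforest"
  show "dprod_tens lam (basis ab) unit_tens = basis ab"
    by (cases ab) (simp add: tens_basis[symmetric] dprod_tens_tens dprod_bulletF_right)
qed

lemma dprod_tens_assoc:
  "dprod_tens lam (dprod_tens lam X Y) Z = dprod_tens lam X (dprod_tens lam Y Z)"
proof (rule trilinear_pm_eq_basis[where T="\<lambda>X Y Z. dprod_tens lam (dprod_tens lam X Y) Z"])
  show "bilinear_pm (\<lambda>X Y. dprod_tens lam (dprod_tens lam X Y) Z)" for Z
    by (rule bilinear_pm_postcompose[OF bilinear_pm_dprod_tens linear_dprod_tens_left])
  show "bilinear_pm (\<lambda>X Y. dprod_tens lam X (dprod_tens lam Y Z))" for Z
    by (rule bilinear_pm_compose_right[OF bilinear_pm_dprod_tens linear_dprod_tens_left])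
  show "linear_pm (dprod_tens lam (dprod_tens lam X Y))" for X Y
    by (rule linear_dprod_tens_right)
  show "linear_pm (\<lambda>Z. dprod_tens lam X (dprod_tens lam Y Z))" for X Y
    by (rule linear_pm_compose[OF linear_dprod_tens_right linear_dprod_tens_right])
next
  fix ab cd ef :: "'x aforest \<times> 'x aforest"
  show "dprod_tens lam (dprod_tens lam (basis ab) (basis cd)) (basis ef) =
      dprod_tens lam (basis ab) (dprod_tens lam (basis cd) (basis ef))"
    by (cases ab, cases cd, cases ef) (simp add: tens_basis[symmetric] dprod_tens_tens dprod_assoc)
qed

lemma dprod_tens_sum_list_left:
  "dprod_tens lam (sum_list (map f xs)) Y = sum_list (map (\<lambda>x. dprod_tens lam (f x) Y) xs)"
  by (rule linear_pm_sum_list[OF linear_dprod_tens_left])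

lemma dprod_tens_sum_list_right:
  "dprod_tens lam X (sum_list (map f ys)) = sum_list (map (\<lambda>y. dprod_tens lam X (f y)) ys)"
  by (rule linear_pm_sum_list[OF linear_dprod_tens_right])

abbreviation id_tens_Bplus ::
    "('x aforest \<times> 'x aforest \<Rightarrow>\<^sub>0 'k::comm_ring_1) \<Rightarrow> ('x aforest \<times> 'x aforest \<Rightarrow>\<^sub>0 'k)" where
  "id_tens_Bplus \<equiv> map_tens id Bplus"

lemma linear_pm_id_tens_Bplus: "linear_pm id_tens_Bplus"
  unfolding map_tens_def[abs_def] by (rule linear_pm_lin_ext)

lemmas id_tens_Bplus_add = linear_pm_add[OF linear_pm_id_tens_Bplus]
lemmas id_tens_Bplus_smul = linear_pm_smul[OF linear_pm_id_tens_Bplus]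

lemma id_tens_Bplus_tens: "id_tens_Bplus (tens p q) = tens p (Bplus q)"
proof (rule bilinear_pm_eq_basis[where B="\<lambda>p q. id_tens_Bplus (tens p q)"])
  show "bilinear_pm (\<lambda>p q. id_tens_Bplus (tens p q))"
    by (rule bilinear_pm_postcompose[OF bilinear_pm_tens linear_pm_id_tens_Bplus])
  show "bilinear_pm (\<lambda>p q. tens p (Bplus q))"
    by (rule bilinear_pm_compose_right[OF bilinear_pm_tens linear_pm_Bplus])
qed (simp add: map_tens_def tens_basis)

lemma id_tens_Bplus_dprod_tens_left:
  fixes lam :: "'k::comm_ring_1" and p :: "'x aforest \<Rightarrow>\<^sub>0 'k"
  shows "id_tens_Bplus (dprod_tens lam (tens p (basis bulletF)) X) =
    dprod_tens lam (tens p (basis bulletF)) (id_tens_Bplus X)"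
proof (rule linear_pm_eq_basis[where L="\<lambda>X. id_tens_Bplus (dprod_tens lam (tens p (basis bulletF)) X)"])
  show "linear_pm (\<lambda>X. id_tens_Bplus (dprod_tens lam (tens p (basis bulletF)) X))"
    by (rule linear_pm_compose[OF linear_pm_id_tens_Bplus linear_dprod_tens_right])
  show "linear_pm (\<lambda>X. dprod_tens lam (tens p (basis bulletF)) (id_tens_Bplus X))"
    by (rule linear_pm_compose[OF linear_dprod_tens_right linear_pm_id_tens_Bplus])
  fix ab :: "'x aforest \<times> 'x aforest"
  show "id_tens_Bplus (dprod_tens lam (tens p (basis bulletF)) (basis ab)) =
      dprod_tens lam (tens p (basis bulletF)) (id_tens_Bplus (basis ab))"
    by (cases ab) (simp add: tens_basis[symmetric] dprod_tens_tens id_tens_Bplus_tens dprod_bulletF_left)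
qed

lemma id_tens_Bplus_dprod_tens_right:
  fixes lam :: "'k::comm_ring_1" and p :: "'x aforest \<Rightarrow>\<^sub>0 'k"
  shows "id_tens_Bplus (dprod_tens lam X (tens p (basis bulletF))) =
    dprod_tens lam (id_tens_Bplus X) (tens p (basis bulletF))"
proof (rule linear_pm_eq_basis[where L="\<lambda>X. id_tens_Bplus (dprod_tens lam X (tens p (basis bulletF)))"])
  show "linear_pm (\<lambda>X. id_tens_Bplus (dprod_tens lam X (tens p (basis bulletF))))"
    by (rule linear_pm_compose[OF linear_pm_id_tens_Bplus linear_dprod_tens_left])
  show "linear_pm (\<lambda>X. dprod_tens lam (id_tens_Bplus X) (tens p (basis bulletF)))"
    by (rule linear_pm_compose[OF linear_dprod_tens_left linear_pm_id_tens_Bplus])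
  fix ab :: "'x aforest \<times> 'x aforest"
  show "id_tens_Bplus (dprod_tens lam (basis ab) (tens p (basis bulletF))) =
      dprod_tens lam (id_tens_Bplus (basis ab)) (tens p (basis bulletF))"
    by (cases ab) (simp add: tens_basis[symmetric] dprod_tens_tens id_tens_Bplus_tens dprod_bulletF_right)
qed

lemma id_tens_Bplus_rota_baxter:
  "dprod_tens lam (id_tens_Bplus X) (id_tens_Bplus Y) =
   id_tens_Bplus (dprod_tens lam (id_tens_Bplus X) Y + dprod_tens lam X (id_tens_Bplus Y)
     + smul lam (dprod_tens lam X Y))"
proof (rule bilinear_pm_eq_basis[where B="\<lambda>X Y. dprod_tens lam (id_tens_Bplus X) (id_tens_Bplus Y)"])
  show "bilinear_pm (\<lambda>X Y. dprod_tens lam (id_tens_Bplus X) (id_tens_Bplus Y))"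
    by (rule bilinear_pm_compose_left[OF bilinear_pm_compose_right[OF bilinear_pm_dprod_tens
          linear_pm_id_tens_Bplus] linear_pm_id_tens_Bplus])
  show "bilinear_pm (\<lambda>X Y. id_tens_Bplus (dprod_tens lam (id_tens_Bplus X) Y
      + dprod_tens lam X (id_tens_Bplus Y) + smul lam (dprod_tens lam X Y)))"
    by (intro bilinear_pm_postcompose[OF _ linear_pm_id_tens_Bplus] bilinear_pm_plus bilinear_pm_scale
        bilinear_pm_compose_left[OF bilinear_pm_dprod_tens] bilinear_pm_compose_right[OF bilinear_pm_dprod_tens]
        bilinear_pm_dprod_tens linear_pm_id_tens_Bplus)
next
  fix ab cd :: "'x aforest \<times> 'x aforest"
  show "dprod_tens lam (id_tens_Bplus (basis ab)) (id_tens_Bplus (basis cd)) =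
      id_tens_Bplus (dprod_tens lam (id_tens_Bplus (basis ab)) (basis cd)
        + dprod_tens lam (basis ab) (id_tens_Bplus (basis cd)) + smul lam (dprod_tens lam (basis ab) (basis cd)))"
    by (cases ab, cases cd)
       (simp add: tens_basis[symmetric] dprod_tens_tens id_tens_Bplus_tens id_tens_Bplus_add
         id_tens_Bplus_smul Bplus_rota_baxter tens_add_right tens_smul_right Bplus_add Bplus_smul)
qed

section \<open>Factorisation of the coproduct along a forest\<close>

lemma foldl_dprod: "foldl (dprod lam) p xs = dprod lam p (foldl (dprod lam) (basis bulletF) xs)"
proof (induction xs arbitrary: p)
  case Nil
  then show ?case by (simp add: dprod_bulletF_right)
next
  case (Cons x xs)
  then show ?case
    by (metis dprod_assoc dprod_bulletF_left foldl_Cons)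
qed

lemma cl_append: "cl lam (ps @ ps') = dprod lam (cl lam ps) (cl lam ps')"
  unfolding cl_def by (simp add: foldl_dprod[of lam "foldl _ _ _"])

lemma cl_Nil [simp]: "cl lam [] = basis bulletF"
  by (simp add: cl_def)

lemma cl_single: "cl lam [P] = hat P"
  by (simp add: cl_def dprod_bulletF_left)

lemma evalQL_eq_dprod: "evalQL lam p qs = dprod lam p (evalQL lam (basis bulletF) qs)"
proof (induction qs arbitrary: p)
  case Nil
  then show ?case by (simp add: dprod_bulletF_right)
next
  case (Cons st qs)
  then show ?case
    by (cases st) (metis dprod_assoc dprod_bulletF_left evalQL.simps(2))
qed

lemma evalQL_Cons:
  "evalQL lam (basis bulletF) ((s, t) # qs) =
    dprod lam (csym s) (dprod lam (evalQT lam t) (evalQL lam (basis bulletF) qs))"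
  by (simp add: evalQL_eq_dprod[of lam "dprod lam _ _"] dprod_bulletF_left dprod_assoc)

lemma dprod_tens_sum_list_sum_list:
  "dprod_tens lam (sum_list (map f xs)) (sum_list (map g ys)) =
    sum_list (map (\<lambda>x. sum_list (map (\<lambda>y. dprod_tens lam (f x) (g y)) ys)) xs)"
  by (subst dprod_tens_sum_list_left) (simp only: dprod_tens_sum_list_right)

lemma sum_list_map_concat_map:
  "sum_list (map f (concat (map g xs))) = sum_list (map (\<lambda>x. sum_list (map f (g x))) xs)"
  by (induction xs) simp_all

definition delta_cutsT :: "'k::comm_ring_1 \<Rightarrow> 'x atree \<Rightarrow> ('x aforest \<times> 'x aforest \<Rightarrow>\<^sub>0 'k)" where
  "delta_cutsT lam t = sum_list (map (\<lambda>(ps, q). tens (cl lam ps) (evalQT lam q)) (cutsT t))"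

definition delta_cutsL ::
    "'k::comm_ring_1 \<Rightarrow> ('x \<times> 'x atree) list \<Rightarrow> ('x aforest \<times> 'x aforest \<Rightarrow>\<^sub>0 'k)" where
  "delta_cutsL lam l =
    sum_list (map (\<lambda>(ps, qs). tens (cl lam ps) (evalQL lam (basis bulletF) qs)) (cutsL l))"

definition delta_dec :: "'x \<Rightarrow> ('x aforest \<times> 'x aforest \<Rightarrow>\<^sub>0 'k::comm_ring_1)" where
  "delta_dec x = tens (basis (decF x)) (basis bulletF) + tens (basis bulletF) (basis (decF x))"

lemma deltaF_eq_sum_cuts:
  "deltaF lam (a, as) = sum_list (map (\<lambda>(ps, q). sum_list (map (\<lambda>(ps', qs).
    tens (cl lam (ps @ ps')) (evalQL lam (evalQT lam q) qs)) (cutsL as))) (cutsT a))"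
  unfolding deltaF_def cutsF_def sum_list_map_concat_map
  by (simp add: case_prod_unfold evalQW_def comp_def)

lemma deltaF_pair: "deltaF lam (a, as) = dprod_tens lam (delta_cutsT lam a) (delta_cutsL lam as)"
  unfolding deltaF_eq_sum_cuts delta_cutsT_def delta_cutsL_def dprod_tens_sum_list_sum_list
  by (simp add: case_prod_unfold cl_append evalQL_eq_dprod[of lam "evalQT lam _"]
      flip: dprod_tens_tens)

lemma delta_cutsL_Nil: "delta_cutsL lam [] = unit_tens"
  by (simp add: delta_cutsL_def)

lemma delta_cutsL_Cons:
  "delta_cutsL lam ((x, t) # r) =
    dprod_tens lam (delta_dec x) (dprod_tens lam (delta_cutsT lam t) (delta_cutsL lam r))"
proof -
  let ?decs = "[([PDec x], None), ([], Some x)]"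
  let ?tens_cutT = "\<lambda>pq. tens (cl lam (fst pq)) (evalQT lam (snd pq))"
  let ?tens_cutL = "\<lambda>pq. tens (cl lam (fst pq)) (evalQL lam (basis bulletF) (snd pq))"
  have split: "tens (cl lam (d @ p @ p')) (evalQL lam (basis bulletF) ((s, q) # qr)) =
      dprod_tens lam (tens (cl lam d) (csym s))
        (dprod_tens lam (tens (cl lam p) (evalQT lam q)) (tens (cl lam p') (evalQL lam (basis bulletF) qr)))"
    for d p p' s q qr
    by (simp only: cl_append evalQL_Cons flip: dprod_tens_tens)
  have "delta_cutsL lam ((x, t) # r) = sum_list (map (\<lambda>y. sum_list (map (\<lambda>pq. sum_list (map (\<lambda>pq'.
      tens (cl lam (fst y @ fst pq @ fst pq')) (evalQL lam (basis bulletF) ((snd y, snd pq) # snd pq')))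
      (cutsL r))) (cutsT t))) ?decs)"
    by (simp only: delta_cutsL_def cutsL.simps sum_list_map_concat_map map_map comp_def
        case_prod_unfold fst_conv snd_conv)
  also have "\<dots> = sum_list (map (\<lambda>y. dprod_tens lam (tens (cl lam (fst y)) (csym (snd y)))
      (sum_list (map (\<lambda>pq. sum_list (map (\<lambda>pq'. dprod_tens lam (?tens_cutT pq) (?tens_cutL pq'))
      (cutsL r))) (cutsT t)))) ?decs)"
    by (simp only: split dprod_tens_sum_list_right)
  also have "\<dots> = sum_list (map (\<lambda>y. dprod_tens lam (tens (cl lam (fst y)) (csym (snd y)))
      (dprod_tens lam (delta_cutsT lam t) (delta_cutsL lam r))) ?decs)"
    unfolding delta_cutsT_def delta_cutsL_def dprod_tens_sum_list_sum_list
    by (simp add: case_prod_unfold)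
  also have "\<dots> = dprod_tens lam (delta_dec x) (dprod_tens lam (delta_cutsT lam t) (delta_cutsL lam r))"
    by (simp add: delta_dec_def dprod_tens_add_left cl_single hat_def csym_def)
  finally show ?thesis .
qed

lemma delta_cutsL_append:
  "delta_cutsL lam (l1 @ l2) = dprod_tens lam (delta_cutsL lam l1) (delta_cutsL lam l2)"
proof (induction l1)
  case Nil
  then show ?case by (simp add: delta_cutsL_Nil dprod_tens_unit_left)
next
  case (Cons xt l1)
  then show ?case
    by (cases xt) (simp add: delta_cutsL_Cons dprod_tens_assoc)
qed

lemma delta_cutsT_Leaf: "delta_cutsT lam Leaf = unit_tens"
  by (simp add: delta_cutsT_def)

lemma delta_cutsT_Bp:
  "delta_cutsT lam (Bp a as) =
    tens (basis (treeF (Bp a as))) (basis bulletF) + id_tens_Bplus (deltaF lam (a, as))"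
  unfolding delta_cutsT_def deltaF_eq_sum_cuts cutsT.simps
  by (simp add: case_prod_unfold sum_list_map_concat_map cl_single hat_def comp_def
      linear_pm_sum_list[OF linear_pm_id_tens_Bplus] id_tens_Bplus_tens)

lemma deltaF_treeF: "deltaF lam (treeF t) = delta_cutsT lam t"
  by (simp add: treeF_def deltaF_pair delta_cutsL_Nil dprod_tens_unit_right)

lemma deltaF_bulletF: "deltaF lam bulletF = unit_tens"
  using deltaF_treeF[of lam Leaf] by (simp add: treeF_Leaf delta_cutsT_Leaf)

lemma deltaF_decF: "deltaF lam (decF x) = delta_dec x"
  unfolding decF_def deltaF_pair delta_cutsL_Cons delta_cutsL_Nil delta_cutsT_Leaf
    dprod_tens_unit_right dprod_tens_unit_left ..

lemma Delta_a_Bplus: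
  "Delta_a lam (Bplus p) = tens (Bplus p) (basis bulletF) + id_tens_Bplus (Delta_a lam p)"
proof (rule linear_pm_eq_basis[where L="\<lambda>p. Delta_a lam (Bplus p)"])
  show "linear_pm (\<lambda>p. Delta_a lam (Bplus p))"
    by (rule linear_pm_compose[OF linear_pm_Delta_a linear_pm_Bplus])
  show "linear_pm (\<lambda>p. tens (Bplus p) (basis bulletF) + id_tens_Bplus (Delta_a lam p))"
    by (rule linear_pm_plus[OF linear_pm_compose[OF linear_tens_left linear_pm_Bplus]
          linear_pm_compose[OF linear_pm_id_tens_Bplus linear_pm_Delta_a]])
  show "Delta_a lam (Bplus (basis F)) = tens (Bplus (basis F)) (basis bulletF) + id_tens_Bplus (Delta_a lam (basis F))"
    for F
    by (cases F) (simp add: Bplus_basis Delta_a_basis deltaF_treeF delta_cutsT_Bp)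
qed

section \<open>Multiplicativity of the coproduct\<close>

lemma Delta_a_dprod_Bplus:
  fixes p q :: "'x aforest \<Rightarrow>\<^sub>0 'k::comm_ring_1"
  assumes "Delta_a lam (dprod lam (Bplus p) q) = dprod_tens lam (Delta_a lam (Bplus p)) (Delta_a lam q)"
    and "Delta_a lam (dprod lam p (Bplus q)) = dprod_tens lam (Delta_a lam p) (Delta_a lam (Bplus q))"
    and "Delta_a lam (dprod lam p q) = dprod_tens lam (Delta_a lam p) (Delta_a lam q)"
  shows "Delta_a lam (dprod lam (Bplus p) (Bplus q)) =
    dprod_tens lam (Delta_a lam (Bplus p)) (Delta_a lam (Bplus q))"
proof -
  let ?m = "dprod_tens lam" and ?D = "Delta_a lam"
  define A B where "A = ?D p" and "B = ?D q"
  define Tp Tq where "Tp = tens (Bplus p) (basis bulletF :: 'x aforest \<Rightarrow>\<^sub>0 'k)"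
    and "Tq = tens (Bplus q) (basis bulletF :: 'x aforest \<Rightarrow>\<^sub>0 'k)"
  have Dp: "?D (Bplus p) = Tp + id_tens_Bplus A"
    unfolding Tp_def A_def by (rule Delta_a_Bplus)
  have Dq: "?D (Bplus q) = Tq + id_tens_Bplus B"
    unfolding Tq_def B_def by (rule Delta_a_Bplus)
  have "?D (dprod lam (Bplus p) (Bplus q)) =
      ?D (Bplus (dprod lam (Bplus p) q + dprod lam p (Bplus q) + smul lam (dprod lam p q)))"
    by (simp add: Bplus_rota_baxter)
  also have "\<dots> = tens (dprod lam (Bplus p) (Bplus q)) (basis bulletF)
      + id_tens_Bplus (?m (?D (Bplus p)) (?D q) + ?m (?D p) (?D (Bplus q)) + smul lam (?m (?D p) (?D q)))"
    by (subst Delta_a_Bplus) (simp add: Delta_a_add Delta_a_smul assms flip: Bplus_rota_baxter)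
  also have "\<dots> = tens (dprod lam (Bplus p) (Bplus q)) (basis bulletF)
      + (?m Tp (id_tens_Bplus B) + ?m (id_tens_Bplus A) Tq
        + id_tens_Bplus (?m (id_tens_Bplus A) B + ?m A (id_tens_Bplus B) + smul lam (?m A B)))"
    unfolding Dp Dq A_def[symmetric] B_def[symmetric]
    by (simp add: dprod_tens_add_left dprod_tens_add_right id_tens_Bplus_add id_tens_Bplus_smul
        Tp_def Tq_def id_tens_Bplus_dprod_tens_left id_tens_Bplus_dprod_tens_right add_ac)
  also have "\<dots> = tens (dprod lam (Bplus p) (Bplus q)) (basis bulletF)
      + (?m Tp (id_tens_Bplus B) + ?m (id_tens_Bplus A) Tq + ?m (id_tens_Bplus A) (id_tens_Bplus B))"
    by (simp only: id_tens_Bplus_rota_baxter)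
  also have "\<dots> = ?m (?D (Bplus p)) (?D (Bplus q))"
    unfolding Dp Dq
    by (simp add: dprod_tens_add_left dprod_tens_add_right Tp_def Tq_def dprod_tens_tens
        dprod_bulletF_left add_ac)
  finally show ?thesis .
qed

lemma Delta_a_dprod_treeF:
  fixes lam :: "'k::comm_ring_1" and s t :: "'x atree"
  assumes IH: "\<And>F1 F2 :: 'x aforest. fsize F1 + fsize F2 < fsize (treeF s) + fsize (treeF t) \<Longrightarrow>
      Delta_a lam (dprod lam (basis F1) (basis F2)) =
        dprod_tens lam (Delta_a lam (basis F1)) (Delta_a lam (basis F2))"
  shows "Delta_a lam (dprod lam (basis (treeF s)) (basis (treeF t))) =
    dprod_tens lam (Delta_a lam (basis (treeF s))) (Delta_a lam (basis (treeF t)))"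
proof (cases "s = Leaf \<or> t = Leaf")
  case True
  then show ?thesis
    by (auto simp: treeF_Leaf dprod_bulletF_left dprod_bulletF_right Delta_a_basis deltaF_bulletF
        dprod_tens_unit_left dprod_tens_unit_right)
next
  case False
  then obtain a as b bs where s: "s = Bp a as" and t: "t = Bp b bs"
    by (metis atree.exhaust)
  show ?thesis
    unfolding s t basis_treeF_Bp
    by (rule Delta_a_dprod_Bplus)
       (unfold basis_treeF_Bp[symmetric], (rule IH, simp add: s t fsize_treeF_Bp)+)
qed

(* The factor contributed to Delta_a F by everything but its last tree, cf. deltaF_eq_delta_init. *)
definition delta_init :: "'k::comm_ring_1 \<Rightarrow> 'x aforest \<Rightarrow> ('x aforest \<times> 'x aforest \<Rightarrow>\<^sub>0 'k)" where
  "delta_init lam F = (if snd F = [] then unit_tens else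
     dprod_tens lam (delta_cutsT lam (fst F))
       (dprod_tens lam (delta_cutsL lam (butlast (snd F))) (delta_dec (fst (last (snd F))))))"

lemma deltaF_glue:
  "deltaF lam (glue F t G) =
    dprod_tens lam (dprod_tens lam (delta_init lam F) (delta_cutsT lam t)) (delta_cutsL lam (snd G))"
proof -
  obtain a as where F: "F = (a, as)" by fastforce
  show ?thesis
  proof (cases "as = []")
    case True
    then show ?thesis
      by (simp add: F delta_init_def glue_def replaceLast_def deltaF_pair dprod_tens_unit_left)
  next
    case False
    then have "as = butlast as @ [last as]" by simp
    moreover have "glue F t G = (a, butlast as @ (fst (last as), t) # snd G)"
      using False by (simp add: F glue_def replaceLast_def)
    ultimately show ?thesis
      using False
      by (simp add: F delta_init_def deltaF_pair delta_cutsL_append delta_cutsL_Cons dprod_tens_assoc)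
  qed
qed

lemma deltaF_eq_delta_init: "deltaF lam F = dprod_tens lam (delta_init lam F) (delta_cutsT lam (lastT F))"
  using deltaF_glue[of lam F "lastT F" bulletF]
  by (simp add: glue_bulletF_right delta_cutsL_Nil dprod_tens_unit_right)

lemma Delta_a_treeF_lin: "Delta_a lam (treeF_lin r) = lin_ext (delta_cutsT lam) r"
  by (simp add: treeF_lin_def lin_ext_compose[OF linear_pm_Delta_a] Delta_a_basis deltaF_treeF)

lemma Delta_a_dprod_basis_reduce_to_trees:
  fixes lam :: "'k::comm_ring_1" and F1 F2 :: "'x aforest"
  assumes "Delta_a lam (dprod lam (basis (treeF (lastT F1))) (basis (treeF (fst F2)))) =
    dprod_tens lam (Delta_a lam (basis (treeF (lastT F1)))) (Delta_a lam (basis (treeF (fst F2))))"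
  shows "Delta_a lam (dprod lam (basis F1) (basis F2)) =
    dprod_tens lam (Delta_a lam (basis F1)) (Delta_a lam (basis F2))"
proof -
  let ?m = "dprod_tens lam"
  obtain b bs where F2: "F2 = (b, bs)" by fastforce
  define l where "l = lastT F1"
  have trees: "lin_ext (delta_cutsT lam) (tprod_lin lam l b) = ?m (delta_cutsT lam l) (delta_cutsT lam b)"
    using assms by (simp add: F2 l_def dprod_treeF Delta_a_treeF_lin Delta_a_basis deltaF_treeF)
  have linear: "linear_pm (\<lambda>Y. ?m (?m (delta_init lam F1) Y) (delta_cutsL lam bs))"
    by (rule linear_pm_compose[OF linear_dprod_tens_left linear_dprod_tens_right])
  have "Delta_a lam (dprod lam (basis F1) (basis F2)) =
      lin_ext (\<lambda>t. deltaF lam (glue F1 t F2)) (tprod_lin lam l b)"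
    by (simp add: dprod_basis_glue F2 l_def glue_lin_def lin_ext_compose[OF linear_pm_Delta_a]
        Delta_a_basis)
  also have "\<dots> = lin_ext (\<lambda>t. ?m (?m (delta_init lam F1) (delta_cutsT lam t)) (delta_cutsL lam bs))
      (tprod_lin lam l b)"
    by (simp add: deltaF_glue F2)
  also have "\<dots> =
      ?m (?m (delta_init lam F1) (lin_ext (delta_cutsT lam) (tprod_lin lam l b))) (delta_cutsL lam bs)"
    by (rule lin_ext_compose[OF linear, symmetric])
  also have "\<dots> = ?m (Delta_a lam (basis F1)) (Delta_a lam (basis F2))"
    unfolding trees
    by (simp add: Delta_a_basis deltaF_eq_delta_init[of lam F1] l_def F2 deltaF_pair dprod_tens_assoc)
  finally show ?thesis .
qed

lemma Delta_a_dprod_basis: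
  "Delta_a lam (dprod lam (basis F1) (basis F2)) =
    dprod_tens lam (Delta_a lam (basis F1)) (Delta_a lam (basis F2))"
proof (induction "fsize F1 + fsize F2" arbitrary: F1 F2 rule: less_induct)
  case less
  have trees_smaller: "fsize (treeF (lastT F1)) + fsize (treeF (fst F2)) \<le> fsize F1 + fsize F2"
    using fsize_lastT[of F1] fsize_fst[of F2] by linarith
  show ?case
    by (rule Delta_a_dprod_basis_reduce_to_trees, rule Delta_a_dprod_treeF, rule less)
       (use trees_smaller in linarith)
qed

theorem mainTheorem1:
  fixes lam :: "'k::comm_ring_1"
  shows "Delta_a lam (basis bulletF) = tens (basis bulletF) (basis bulletF :: 'x aforest \<Rightarrow>\<^sub>0 'k)
    \<and> (\<forall>x::'x. Delta_a lam (basis (decF x)) =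
           tens (basis (decF x)) (basis bulletF) + tens (basis bulletF) (basis (decF x)))
    \<and> (\<forall>F::'x aforest. Delta_a lam (Bplus (basis F)) =
           tens (Bplus (basis F)) (basis bulletF) + map_tens id Bplus (Delta_a lam (basis F)))
    \<and> (\<forall>F1 F2 :: 'x aforest. Delta_a lam (dprod lam (basis F1) (basis F2)) =
           dprod_tens lam (Delta_a lam (basis F1)) (Delta_a lam (basis F2)))"
  by (simp add: Delta_a_basis deltaF_bulletF deltaF_decF delta_dec_def Delta_a_Bplus
      Delta_a_dprod_basis)

end
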